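(* Let $h\ge 2$ and $k\ge 1$ be integers. Let $B'$ be a collection of $kh$ colored balls with exactly $h$ balls of color $i$ for each color $i\in[k]$. Let $C'\subseteq B'$ be obtained by keeping each ball independently with probability $\alpha\in[0,\frac{1}{2h}]$. Then the probability that all balls in $C'$ have distinct colors is at most $\exp(-kh(h-1)\alpha^2/4)$. *)

theory Defs
  imports "HOL-Probability.Probability"
begin

definition balls :: "nat \<Rightarrow> nat \<Rightarrow> (nat \<times> nat) set" where
  "balls k h = {0..<k} \<times> {0..<h}"

definition random_subcollection :: "'a set \<Rightarrow> real \<Rightarrow> 'a set pmf" where
  "random_subcollection B \<alpha> =
     map_pmf (\<lambda>f. {b \<in> B. f b}) (Pi_pmf B False (\<lambda>_. bernoulli_pmf \<alpha>))"

definition distinct_colours :: "(nat \<times> nat) set \<Rightarrow> bool" where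
  "distinct_colours C \<longleftrightarrow> inj_on fst C"

end

theory Submission
  imports Defs
begin

text \<open>The colour classes are disjoint blocks of independent coin flips, and the kept balls
  have distinct colours iff every class keeps at most one ball.  A class of \<open>h\<close> balls does so
  with probability \<open>(1 - \<alpha>)\<^sup>h + h \<alpha> (1 - \<alpha>)\<^bsup>h-1\<^esup> = (1 - \<alpha>)\<^bsup>h-1\<^esup> (1 + (h - 1) \<alpha>)\<close>, and the
  estimates \<open>1 - \<alpha> \<le> exp (- \<alpha> - \<alpha>\<^sup>2/2)\<close> and \<open>1 + y \<le> exp (y - y\<^sup>2/3)\<close> for \<open>y = (h - 1) \<alpha> \<le> 1/2\<close>
  bound this by \<open>exp (- h (h - 1) \<alpha>\<^sup>2 / 4)\<close>.\<close>

lemma ln_one_minus_le_quadratic: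
  fixes x :: real
  assumes "0 \<le> x" "x < 1"
  shows "ln (1 - x) \<le> - x - x\<^sup>2 / 2"
proof -
  let ?g = "\<lambda>t::real. - t - t\<^sup>2 / 2 - ln (1 - t)"
  have "?g 0 \<le> ?g x"
  proof (rule DERIV_nonneg_imp_nondecreasing[OF assms(1)])
    fix t :: real
    assume "0 \<le> t" "t \<le> x"
    with assms have "t < 1" by simp
    then have "(?g has_real_derivative t\<^sup>2 / (1 - t)) (at t)"
      by (auto intro!: derivative_eq_intros simp: field_simps power2_eq_square)
    with \<open>t < 1\<close> show "\<exists>y. (?g has_real_derivative y) (at t) \<and> 0 \<le> y"
      by auto
  qed
  then show ?thesis by simp
qed

lemma ln_one_plus_le_quadratic:
  fixes y :: real
  assumes "0 \<le> y" "y \<le> 1 / 2"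
  shows "ln (1 + y) \<le> y - y\<^sup>2 / 3"
proof -
  let ?g = "\<lambda>t::real. t - t\<^sup>2 / 3 - ln (1 + t)"
  have "?g 0 \<le> ?g y"
  proof (rule DERIV_nonneg_imp_nondecreasing[OF assms(1)])
    fix t :: real
    assume "0 \<le> t" "t \<le> y"
    then have "(?g has_real_derivative t * (1 - 2 * t) / (3 * (1 + t))) (at t)"
      by (auto intro!: derivative_eq_intros simp: field_simps power2_eq_square)
    with \<open>0 \<le> t\<close> \<open>t \<le> y\<close> assms show "\<exists>z. (?g has_real_derivative z) (at t) \<and> 0 \<le> z"
      by auto
  qed
  then show ?thesis by simp
qed

lemma at_most_one_success_le_exp:
  fixes n :: nat and a :: real
  assumes "0 \<le> a" "real n * a \<le> 1 / 2"
  shows "(1 - a) ^ n + real n * a * (1 - a) ^ (n - 1) \<le> exp (- real n * (real n - 1) * a\<^sup>2 / 4)"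
proof (cases n)
  case 0
  then show ?thesis by simp
next
  case (Suc m)
  have "real n * a = a + real m * a" "0 \<le> real m * a"
    using Suc assms(1) by (simp_all add: algebra_simps)
  with assms have "a \<le> 1 / 2" "real m * a \<le> 1 / 2"
    by linarith+
  have "1 - a \<le> exp (- a - a\<^sup>2 / 2)"
    using exp_mono[OF ln_one_minus_le_quadratic[OF assms(1)]] \<open>a \<le> 1 / 2\<close> by simp
  then have "(1 - a) ^ m \<le> exp (- a - a\<^sup>2 / 2) ^ m"
    using \<open>a \<le> 1 / 2\<close> by (intro power_mono) auto
  moreover have "1 + real m * a \<le> exp (real m * a - (real m * a)\<^sup>2 / 3)"
    using exp_mono[OF ln_one_plus_le_quadratic[OF \<open>0 \<le> real m * a\<close> \<open>real m * a \<le> 1 / 2\<close>]]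
      \<open>0 \<le> real m * a\<close> by simp
  ultimately have "(1 - a) ^ m * (1 + real m * a)
      \<le> exp (- a - a\<^sup>2 / 2) ^ m * exp (real m * a - (real m * a)\<^sup>2 / 3)"
    using \<open>a \<le> 1 / 2\<close> assms(1) by (intro mult_mono) auto
  also have "\<dots> = exp (- real m * a\<^sup>2 / 2 - (real m)\<^sup>2 * a\<^sup>2 / 3)"
    by (simp add: exp_of_nat_mult[symmetric] exp_add[symmetric] algebra_simps power_mult_distrib)
  also have "\<dots> \<le> exp (- (real m + 1) * real m * a\<^sup>2 / 4)"
  proof (rule exp_mono)
    have "0 \<le> real m * a\<^sup>2" "0 \<le> (real m)\<^sup>2 * a\<^sup>2"
      by simp_all
    then show "- real m * a\<^sup>2 / 2 - (real m)\<^sup>2 * a\<^sup>2 / 3 \<le> - (real m + 1) * real m * a\<^sup>2 / 4"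
      by (simp add: algebra_simps power2_eq_square)
  qed
  finally show ?thesis
    using Suc by (simp add: algebra_simps)
qed

lemma measure_pair_pmf_Times:
  "measure_pmf.prob (pair_pmf M N) (A \<times> B) = measure_pmf.prob M A * measure_pmf.prob N B"
proof -
  have "measure_pmf.prob (pair_pmf M N) (A \<times> B)
      = measure_pmf.prob (pair_pmf M N) ((A \<inter> set_pmf M) \<times> (B \<inter> set_pmf N))"
    by (intro measure_prob_cong_0) (auto simp: pmf_pair set_pmf_iff)
  also have "\<dots> = measure_pmf.prob M (A \<inter> set_pmf M) * measure_pmf.prob N (B \<inter> set_pmf N)"
    by (intro measure_pmf_prob_product) auto
  finally show ?thesis
    by (simp add: measure_Int_set_pmf)
qed

lemma measure_Pi_pmf_union_independent:
  assumes "finite A" "finite B" "A \<inter> B = {}"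
    and P: "\<And>f g. (\<And>x. x \<in> A \<Longrightarrow> f x = g x) \<Longrightarrow> P f = P g"
    and Q: "\<And>f g. (\<And>x. x \<in> B \<Longrightarrow> f x = g x) \<Longrightarrow> Q f = Q g"
  shows "measure_pmf.prob (Pi_pmf (A \<union> B) dflt p) {f. P f \<and> Q f}
           = measure_pmf.prob (Pi_pmf A dflt p) {f. P f} * measure_pmf.prob (Pi_pmf B dflt p) {f. Q f}"
proof -
  let ?merge = "\<lambda>(f, g) x. if x \<in> A then f x else g x"
  have "?merge -` {f. P f \<and> Q f} = {f. P f} \<times> {g. Q g}"
  proof -
    have "P (?merge (f, g)) = P f" for f g
      by (rule P) simp
    moreover have "Q (?merge (f, g)) = Q g" for f g
      by (rule Q) (use assms(3) in auto)
    ultimately show ?thesis by auto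
  qed
  moreover have "Pi_pmf (A \<union> B) dflt p = map_pmf ?merge (pair_pmf (Pi_pmf A dflt p) (Pi_pmf B dflt p))"
    using assms(1-3) by (rule Pi_pmf_union)
  ultimately show ?thesis
    by (simp add: measure_pair_pmf_Times)
qed

lemma measure_Pi_pmf_UN_independent:
  fixes A :: "'i \<Rightarrow> 'a set" and P :: "'i \<Rightarrow> ('a \<Rightarrow> 'b) \<Rightarrow> bool"
  assumes "finite I" "\<And>i. i \<in> I \<Longrightarrow> finite (A i)" "disjoint_family_on A I"
    and "\<And>i f g. i \<in> I \<Longrightarrow> (\<And>x. x \<in> A i \<Longrightarrow> f x = g x) \<Longrightarrow> P i f = P i g"
  shows "measure_pmf.prob (Pi_pmf (\<Union>i\<in>I. A i) dflt p) {f. \<forall>i\<in>I. P i f}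
           = (\<Prod>i\<in>I. measure_pmf.prob (Pi_pmf (A i) dflt p) {f. P i f})"
  using assms
proof (induction I rule: finite_induct)
  case empty
  show ?case by simp
next
  case (insert i I)
  note local = insert.prems(3)
  have disjoint: "A i \<inter> (\<Union>j\<in>I. A j) = {}" "disjoint_family_on A I"
    using insert.hyps(2) insert.prems(2) by (simp_all add: disjoint_family_on_insert)
  have "measure_pmf.prob (Pi_pmf (\<Union>j\<in>I. A j) dflt p) {f. \<forall>j\<in>I. P j f}
      = (\<Prod>j\<in>I. measure_pmf.prob (Pi_pmf (A j) dflt p) {f. P j f})"
  proof (rule insert.IH)
    show "finite (A j)" if "j \<in> I" for j
      using that insert.prems(1) by simp
    show "disjoint_family_on A I"
      by (fact disjoint(2))
    show "P j f = P j g" if "j \<in> I" "\<And>x. x \<in> A j \<Longrightarrow> f x = g x" for j f g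
      by (rule local) (use that in simp_all)
  qed
  moreover have "measure_pmf.prob (Pi_pmf (A i \<union> (\<Union>j\<in>I. A j)) dflt p) {f. P i f \<and> (\<forall>j\<in>I. P j f)}
      = measure_pmf.prob (Pi_pmf (A i) dflt p) {f. P i f}
        * measure_pmf.prob (Pi_pmf (\<Union>j\<in>I. A j) dflt p) {f. \<forall>j\<in>I. P j f}"
  proof (rule measure_Pi_pmf_union_independent)
    show "finite (A i)" "finite (\<Union>j\<in>I. A j)"
      using insert.hyps(1) insert.prems(1) by auto
    show "A i \<inter> (\<Union>j\<in>I. A j) = {}"
      by (fact disjoint(1))
    show "P i f = P i g" if "\<And>x. x \<in> A i \<Longrightarrow> f x = g x" for f g
      by (rule local) (use that in simp_all)
    show "(\<forall>j\<in>I. P j f) = (\<forall>j\<in>I. P j g)" if "\<And>x. x \<in> (\<Union>j\<in>I. A j) \<Longrightarrow> f x = g x" for f g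
      by (intro ball_cong refl local) (use that in auto)
  qed
  ultimately show ?case
    using insert.hyps by simp
qed

lemma measure_Pi_pmf_bernoulli_card_le_1:
  assumes "finite A" "0 \<le> a" "a \<le> 1"
  shows "measure_pmf.prob (Pi_pmf A dflt (\<lambda>_. bernoulli_pmf a)) {f. card {x\<in>A. f x} \<le> 1}
           = (1 - a) ^ card A + real (card A) * a * (1 - a) ^ (card A - 1)"
proof -
  have "measure_pmf.prob (Pi_pmf A dflt (\<lambda>_. bernoulli_pmf a)) {f. card {x\<in>A. f x} \<le> 1}
      = measure_pmf.prob (map_pmf (\<lambda>f. card {x\<in>A. f x}) (Pi_pmf A dflt (\<lambda>_. bernoulli_pmf a))) {0, 1}"
    by (auto simp: measure_map_pmf vimage_def le_Suc_eq intro!: arg_cong[where f = "measure_pmf.prob _"])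
  also have "\<dots> = measure_pmf.prob (binomial_pmf (card A) a) {0, 1}"
    using assms by (subst binomial_pmf_altdef') auto
  also have "\<dots> = pmf (binomial_pmf (card A) a) 0 + pmf (binomial_pmf (card A) a) 1"
    by (subst measure_measure_pmf_finite) auto
  also have "\<dots> = (1 - a) ^ card A + real (card A) * a * (1 - a) ^ (card A - 1)"
    using assms by simp
  finally show ?thesis .
qed

lemma distinct_colours_iff_card_colour_class_le_1:
  "distinct_colours {b \<in> balls k h. f b} \<longleftrightarrow> (\<forall>c\<in>{0..<k}. card {b \<in> {c} \<times> {0..<h}. f b} \<le> 1)"
proof -
  have "card {b \<in> {c} \<times> {0..<h}. f b} \<le> 1
      \<longleftrightarrow> (\<forall>x\<in>{b \<in> balls k h. f b}. \<forall>y\<in>{b \<in> balls k h. f b}. fst x = c \<longrightarrow> fst y = c \<longrightarrow> x = y)"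
    if "c < k" for c
  proof -
    have "card {b \<in> {c} \<times> {0..<h}. f b} \<le> Suc 0
        \<longleftrightarrow> (\<forall>x\<in>{b \<in> {c} \<times> {0..<h}. f b}. \<forall>y\<in>{b \<in> {c} \<times> {0..<h}. f b}. x = y)"
      by (rule card_le_Suc0_iff_eq) simp
    then show ?thesis
      using that by (auto simp: balls_def)
  qed
  then show ?thesis
    unfolding distinct_colours_def inj_on_def by (auto simp: balls_def)
qed

lemma prob_distinct_colours_random_subcollection:
  fixes \<alpha> :: real
  assumes "0 \<le> \<alpha>" "\<alpha> \<le> 1"
  shows "measure_pmf.prob (random_subcollection (balls k h) \<alpha>) {C. distinct_colours C}
           = ((1 - \<alpha>) ^ h + real h * \<alpha> * (1 - \<alpha>) ^ (h - 1)) ^ k"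
proof -
  let ?coins = "\<lambda>B. Pi_pmf B False (\<lambda>_. bernoulli_pmf \<alpha>)"
  let ?class = "\<lambda>c. {c} \<times> {0..<h}"
  have class_prob: "measure_pmf.prob (?coins (?class c)) {f. card {b \<in> ?class c. f b} \<le> 1}
      = (1 - \<alpha>) ^ h + real h * \<alpha> * (1 - \<alpha>) ^ (h - 1)" for c
    using measure_Pi_pmf_bernoulli_card_le_1[OF _ assms, of "?class c" False]
    by (simp add: card_cartesian_product)
  have classes: "balls k h = (\<Union>c\<in>{0..<k}. ?class c)"
    by (auto simp: balls_def)
  have "measure_pmf.prob (random_subcollection (balls k h) \<alpha>) {C. distinct_colours C}
      = measure_pmf.prob (?coins (balls k h)) {f. \<forall>c\<in>{0..<k}. card {b \<in> ?class c. f b} \<le> 1}"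
    by (simp add: random_subcollection_def distinct_colours_iff_card_colour_class_le_1 vimage_def)
  also have "\<dots> = (\<Prod>c\<in>{0..<k}. measure_pmf.prob (?coins (?class c)) {f. card {b \<in> ?class c. f b} \<le> 1})"
    unfolding classes
  proof (rule measure_Pi_pmf_UN_independent)
    show "(card {b \<in> ?class c. f b} \<le> 1) = (card {b \<in> ?class c. g b} \<le> 1)"
      if "\<And>b. b \<in> ?class c \<Longrightarrow> f b = g b" for c f g
      using that by (metis (mono_tags, lifting) Collect_cong)
  qed (auto simp: disjoint_family_on_def)
  also have "\<dots> = ((1 - \<alpha>) ^ h + real h * \<alpha> * (1 - \<alpha>) ^ (h - 1)) ^ k"
    by (simp only: class_prob prod_constant card_atLeastLessThan diff_zero)
  finally show ?thesis .
qed

theorem lemma3p7: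
  fixes h k :: nat and \<alpha> :: real
  assumes "h \<ge> 2" and "k \<ge> 1" and "0 \<le> \<alpha>" and "\<alpha> \<le> 1 / (2 * real h)"
  shows "measure_pmf.prob (random_subcollection (balls k h) \<alpha>) {C. distinct_colours C}
           \<le> exp (- real k * real h * (real h - 1) * \<alpha>\<^sup>2 / 4)"
proof -
  have "real h * \<alpha> \<le> 1 / 2"
    using assms(1,4) by (simp add: field_simps)
  moreover have "\<alpha> \<le> real h * \<alpha>"
    using assms(1,3) mult_right_mono[of 1 "real h" \<alpha>] by simp
  ultimately have "\<alpha> \<le> 1"
    by linarith
  have "measure_pmf.prob (random_subcollection (balls k h) \<alpha>) {C. distinct_colours C}
      = ((1 - \<alpha>) ^ h + real h * \<alpha> * (1 - \<alpha>) ^ (h - 1)) ^ k"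
    using assms(3) \<open>\<alpha> \<le> 1\<close> by (rule prob_distinct_colours_random_subcollection)
  also have "\<dots> \<le> exp (- real h * (real h - 1) * \<alpha>\<^sup>2 / 4) ^ k"
    using assms(3) \<open>\<alpha> \<le> 1\<close> \<open>real h * \<alpha> \<le> 1 / 2\<close> by (intro power_mono at_most_one_success_le_exp) auto
  also have "\<dots> = exp (- real k * real h * (real h - 1) * \<alpha>\<^sup>2 / 4)"
    by (simp add: exp_of_nat_mult[symmetric] algebra_simps)
  finally show ?thesis .
qed

end
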